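(* Let $G$ be a simple graph, let $k\ge 1$, let $M$ be a maximal $k$-edge-colorable subgraph of $G$ (maximal with respect to inclusion of edge sets), and let $F$ be the set of vertices $v$ with $d_M(v) < k$. Then the induced subgraph $G[F]$ has maximum degree at most $k-1$.
   Context: $d_M(v)$ denotes the number of edges of $M$ incident to $v$. A graph is $k$-edge-colorable if its edges can be colored with $k$ colors so that adjacent edges receive distinct colors. *)

theory Defs
  imports Main
begin

definition simple_graph :: "'a set \<Rightarrow> 'a set set \<Rightarrow> bool" where
  "simple_graph V E \<longleftrightarrow> finite V \<and> (\<forall>e\<in>E. e \<subseteq> V \<and> card e = 2)"

definition deg :: "'a set set \<Rightarrow> 'a \<Rightarrow> nat" where
  "deg M v = card {e\<in>M. v \<in> e}"

definition edge_colorable :: "nat \<Rightarrow> 'a set set \<Rightarrow> bool" where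
  "edge_colorable k M \<longleftrightarrow> (\<exists>c :: 'a set \<Rightarrow> nat.
      (\<forall>e\<in>M. c e < k) \<and>
      (\<forall>e\<in>M. \<forall>e'\<in>M. e \<noteq> e' \<and> e \<inter> e' \<noteq> {} \<longrightarrow> c e \<noteq> c e'))"

definition maximal_edge_colorable :: "nat \<Rightarrow> 'a set set \<Rightarrow> 'a set set \<Rightarrow> bool" where
  "maximal_edge_colorable k E M \<longleftrightarrow> M \<subseteq> E \<and> edge_colorable k M \<and>
      (\<forall>M'. M \<subseteq> M' \<and> M' \<subseteq> E \<and> edge_colorable k M' \<longrightarrow> M' = M)"

definition induced_edges :: "'a set set \<Rightarrow> 'a set \<Rightarrow> 'a set set" where
  "induced_edges E F = {e\<in>E. e \<subseteq> F}"

end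

theory Submission
  imports Defs
begin

text \<open>Fix \<open>v\<close> with \<open>d_M(v) < k\<close> and a proper \<open>k\<close>-edge-colouring of \<open>M\<close>. By
  maximality, every edge \<open>vu \<notin> M\<close> of \<open>G\<close> is non-addable, so it roots Vizing fans at \<open>v\<close>.
  Fan shifting shows that a colour missing at \<open>v\<close> is missing at no fan end, and a
  Kempe-chain argument shows that no colour is missing at two distinct fan ends. Hence
  each fan end \<open>x\<close> with \<open>d_M(x) < k\<close> can be injectively assigned an \<open>M\<close>-neighbour
  \<open>w\<close> of \<open>v\<close> whose edge \<open>vw\<close> carries a colour missing at \<open>x\<close>. Counting gives that
  the neighbours \<open>u \<in> F\<close> of \<open>v\<close> with \<open>vu \<notin> M\<close> are at most as many as the
  \<open>M\<close>-neighbours of \<open>v\<close> of degree \<open>k\<close>, so \<open>v\<close> has at most \<open>d_M(v) < k\<close> neighbours in \<open>F\<close>.\<close>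

lemma card_2_obtain_other:
  assumes "card e = 2" "v \<in> e"
  obtains w where "e = {v, w}" "w \<noteq> v"
  using assms by (auto simp: card_2_iff doubleton_eq_iff)

lemma card_2_eq_doubleton:
  assumes "card e = 2" "z \<in> e" "z' \<in> e" "z \<noteq> z'"
  shows "e = {z, z'}"
  using assms by (auto simp: card_2_iff)

lemma deg_eq_card_neighbours:
  assumes "\<forall>e\<in>K. card e = 2"
  shows "deg K v = card {w. {v, w} \<in> K}"
proof -
  have "{e\<in>K. v \<in> e} \<subseteq> (\<lambda>w. {v, w}) ` {w. {v, w} \<in> K}"
  proof
    fix e assume "e \<in> {e\<in>K. v \<in> e}"
    with assms obtain w where "e = {v, w}" "e \<in> K"
      by (auto elim: card_2_obtain_other)
    then show "e \<in> (\<lambda>w. {v, w}) ` {w. {v, w} \<in> K}" by blast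
  qed
  then have star: "{e\<in>K. v \<in> e} = (\<lambda>w. {v, w}) ` {w. {v, w} \<in> K}" by auto
  have "inj_on (\<lambda>w. {v, w}) {w. {v, w} \<in> K}"
    by (rule inj_onI) (auto simp: doubleton_eq_iff)
  from card_image[OF this] show ?thesis
    unfolding deg_def star .
qed

definition reachable :: "'a set set \<Rightarrow> 'a \<Rightarrow> 'a \<Rightarrow> bool" where
  "reachable K = (\<lambda>s t. {s, t} \<in> K)\<^sup>*\<^sup>*"

lemma reachable_edge: "reachable K s z \<Longrightarrow> {z, z'} \<in> K \<Longrightarrow> reachable K s z'"
  unfolding reachable_def by (rule rtranclp.rtrancl_into_rtrancl)

lemma reachable_sym:
  assumes "reachable K s t"
  shows "reachable K t s"
  using assms unfolding reachable_def
proof (induction rule: rtranclp_induct)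
  case (step t0 t)
  have "{t, t0} \<in> K" using step(2) by (simp add: insert_commute)
  then show ?case using step(3) by (rule converse_rtranclp_into_rtranclp)
qed simp

lemma reachable_from_isolated:
  assumes "finite K" "deg K a = 0" "reachable K a b"
  shows "b = a"
  using assms(3) unfolding reachable_def
proof (cases rule: converse_rtranclpE)
  case (step z)
  then have "{a, z} \<in> {e\<in>K. a \<in> e}" by simp
  moreover have "finite {e\<in>K. a \<in> e}" using assms(1) by simp
  ultimately have "deg K a \<noteq> 0" unfolding deg_def by (metis card_0_eq empty_iff)
  with assms(2) show ?thesis by simp
qed simp

lemma reachable_delete_pendant_edge:
  assumes pendant: "{e\<in>K. a \<in> e} = {{a, a'}}" and "a' \<noteq> a"
    and "reachable K a b" "b \<noteq> a"
  shows "reachable (K - {{a, a'}}) a' b"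
proof -
  let ?K' = "K - {{a, a'}}"
  have unique: "z = a'" if "{a, z} \<in> K" for z
  proof -
    have "{a, z} \<in> {e\<in>K. a \<in> e}" using that by simp
    then have "{a, z} = {a, a'}" unfolding pendant by simp
    then show ?thesis using \<open>a' \<noteq> a\<close> by (auto simp: doubleton_eq_iff)
  qed
  have avoid_a: "reachable ?K' s (if t = a then a' else t)"
    if "reachable K s t" "s \<noteq> a" for s t
    using that(1) unfolding reachable_def
  proof (induction rule: rtranclp_induct)
    case base
    with \<open>s \<noteq> a\<close> show ?case by simp
  next
    case (step t0 t)
    consider "t0 = a" | "t0 \<noteq> a" "t = a" | "t0 \<noteq> a" "t \<noteq> a" by blast
    then show ?case
    proof cases
      case 1
      with step(2) have "t = a'" by (intro unique) simp
      with 1 step(3) \<open>a' \<noteq> a\<close> show ?thesis by simp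
    next
      case 2
      with step(2) have "t0 = a'" by (intro unique) (simp add: insert_commute)
      with 2 step(3) show ?thesis by simp
    next
      case 3
      then have "{t0, t} \<noteq> {a, a'}" by (auto simp: doubleton_eq_iff)
      with step(2) have "{t0, t} \<in> ?K'" by simp
      with 3 step(3) show ?thesis
        by (simp add: rtranclp.rtrancl_into_rtrancl)
    qed
  qed
  from \<open>reachable K a b\<close>[unfolded reachable_def] show ?thesis
  proof (cases rule: converse_rtranclpE)
    case base
    with \<open>b \<noteq> a\<close> show ?thesis by simp
  next
    case (step z)
    from step(1) have "z = a'" by (rule unique)
    with step have "reachable K a' b" by (simp add: reachable_def)
    with avoid_a[of a' b] \<open>a' \<noteq> a\<close> \<open>b \<noteq> a\<close> show ?thesis
      by (simp add: reachable_def)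
  qed
qed

text \<open>A graph of maximum degree two is a disjoint union of paths and cycles, so a
  component contains at most two vertices of degree at most one.\<close>
lemma max_degree_two_no_three_ends:
  assumes "finite K" "\<forall>e\<in>K. card e = 2" "\<forall>z. deg K z \<le> 2"
    and "deg K a \<le> 1" "deg K b \<le> 1" "deg K d \<le> 1"
    and "a \<noteq> b" "a \<noteq> d" "b \<noteq> d"
    and "reachable K a b" "reachable K a d"
  shows False
  using assms
proof (induction "card K" arbitrary: K a b d rule: less_induct)
  case less
  note hyps = less.prems
  have "deg K a \<noteq> 0"
    using reachable_from_isolated[OF hyps(1) _ hyps(10)] hyps(7) by auto
  with hyps(4) have "deg K a = 1" by simp
  then obtain e0 where e0: "{e\<in>K. a \<in> e} = {e0}"
    unfolding deg_def by (meson card_1_singletonE)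
  then have "e0 \<in> K" "a \<in> e0" by auto
  with hyps(2) obtain a' where a': "e0 = {a, a'}" "a' \<noteq> a"
    by (meson card_2_obtain_other)
  define K' where "K' = K - {e0}"
  have finite': "finite K'" using hyps(1) unfolding K'_def by simp
  have card': "card K' < card K"
    unfolding K'_def using card_Diff1_less[OF hyps(1) \<open>e0 \<in> K\<close>] .
  have deg_le: "deg K' z \<le> deg K z" for z
    unfolding K'_def deg_def using hyps(1) by (intro card_mono) auto
  have "deg K' a' = deg K a' - 1"
  proof -
    have "{e\<in>K'. a' \<in> e} = {e\<in>K. a' \<in> e} - {e0}" unfolding K'_def by auto
    then show ?thesis
      unfolding deg_def using a'(1) \<open>e0 \<in> K\<close> hyps(1) by simp
  qed
  have reach_b: "reachable K' a' b" and reach_d: "reachable K' a' d"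
    using reachable_delete_pendant_edge[OF e0[unfolded a'(1)] a'(2)] hyps(7-11)
    unfolding K'_def a'(1) by auto
  show False
  proof (cases "a' = b \<or> a' = d")
    case True
    then have "deg K' a' = 0"
      using \<open>deg K' a' = deg K a' - 1\<close> hyps(5,6) by auto
    then have "b = a'" "d = a'"
      using reachable_from_isolated[OF finite'] reach_b reach_d by blast+
    with hyps(9) show False by simp
  next
    case False
    show False
    proof (rule less.hyps[OF card' finite' _ _ _ _ _ _ _ hyps(9) reach_b reach_d])
      show "\<forall>e\<in>K'. card e = 2" using hyps(2) unfolding K'_def by blast
      show "\<forall>z. deg K' z \<le> 2" using deg_le hyps(3) order_trans by blast
      show "deg K' a' \<le> 1" using \<open>deg K' a' = deg K a' - 1\<close> hyps(3)[rule_format, of a'] by linarith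
      show "deg K' b \<le> 1" "deg K' d \<le> 1" using deg_le[of b] deg_le[of d] hyps(5,6) by linarith+
      show "a' \<noteq> b" "a' \<noteq> d" using False by simp_all
    qed
  qed
qed

definition proper_edge_colouring :: "nat \<Rightarrow> 'a set set \<Rightarrow> ('a set \<Rightarrow> nat) \<Rightarrow> bool" where
  "proper_edge_colouring k M c \<longleftrightarrow>
     (\<forall>e\<in>M. c e < k) \<and> (\<forall>e\<in>M. \<forall>e'\<in>M. e \<noteq> e' \<and> e \<inter> e' \<noteq> {} \<longrightarrow> c e \<noteq> c e')"

definition missing_colours :: "nat \<Rightarrow> 'a set set \<Rightarrow> ('a set \<Rightarrow> nat) \<Rightarrow> 'a \<Rightarrow> nat set" where
  "missing_colours k M c z = {g. g < k \<and> (\<forall>e\<in>M. z \<in> e \<longrightarrow> c e \<noteq> g)}"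

lemma edge_colorable_iff_proper: "edge_colorable k M \<longleftrightarrow> (\<exists>c. proper_edge_colouring k M c)"
  unfolding edge_colorable_def proper_edge_colouring_def ..

lemma missing_colours_less: "g \<in> missing_colours k M c z \<Longrightarrow> g < k"
  unfolding missing_colours_def by simp

lemma missing_colours_edge: "g \<in> missing_colours k M c z \<Longrightarrow> e \<in> M \<Longrightarrow> z \<in> e \<Longrightarrow> c e \<noteq> g"
  unfolding missing_colours_def by simp

lemma missing_colours_cong:
  "(\<And>e. e \<in> M \<Longrightarrow> z \<in> e \<Longrightarrow> c' e = c e) \<Longrightarrow> missing_colours k M c' z = missing_colours k M c z"
  unfolding missing_colours_def by auto

lemma missing_colours_nonempty:
  assumes "finite M" "deg M z < k"
  shows "missing_colours k M c z \<noteq> {}"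
proof -
  let ?used = "c ` {e\<in>M. z \<in> e}"
  have "card ?used < card {..<k}"
    using card_image_le[of "{e\<in>M. z \<in> e}" c] assms unfolding deg_def by simp
  moreover have "finite ?used" using assms(1) by simp
  ultimately have "\<not> {..<k} \<subseteq> ?used"
    using card_mono[of ?used "{..<k}"] by linarith
  then show ?thesis
    unfolding missing_colours_def by blast
qed

lemma inj_on_colours_at_vertex:
  assumes "proper_edge_colouring k M c"
  shows "inj_on c {e\<in>M. z \<in> e}"
  using assms unfolding proper_edge_colouring_def by (intro inj_onI) blast

lemma proper_edge_colouring_insert:
  assumes proper: "proper_edge_colouring k M c"
    and "a \<in> missing_colours k M c v" "a \<in> missing_colours k M c x"
  shows "proper_edge_colouring k (insert {v, x} M) (c({v, x} := a))"
  unfolding proper_edge_colouring_def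
proof (intro conjI ballI impI)
  fix e assume "e \<in> insert {v, x} M"
  then show "(c({v, x} := a)) e < k"
    using proper assms(2) unfolding proper_edge_colouring_def by (auto dest: missing_colours_less)
next
  fix e e' assume e: "e \<in> insert {v, x} M" "e' \<in> insert {v, x} M" "e \<noteq> e' \<and> e \<inter> e' \<noteq> {}"
  consider "e = {v, x}" | "e' = {v, x}" | "e \<noteq> {v, x}" "e' \<noteq> {v, x}" by blast
  then show "(c({v, x} := a)) e \<noteq> (c({v, x} := a)) e'"
  proof cases
    case 1
    then have "e' \<in> M" "v \<in> e' \<or> x \<in> e'" using e by auto
    with 1 e assms(2,3) show ?thesis by (auto dest: missing_colours_edge)
  next
    case 2
    then have "e \<in> M" "v \<in> e \<or> x \<in> e" using e by auto
    with 2 e assms(2,3) show ?thesis by (auto dest: missing_colours_edge)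
  next
    case 3
    with e proper show ?thesis unfolding proper_edge_colouring_def by auto
  qed
qed

lemma missing_colours_update_old_colour:
  assumes proper: "proper_edge_colouring k M c"
    and "{v, x} \<in> M" "a \<in> missing_colours k M c v"
  shows "c {v, x} \<in> missing_colours k M (c({v, x} := a)) v"
  unfolding missing_colours_def
proof (intro CollectI conjI ballI impI)
  show "c {v, x} < k" using proper assms(2) unfolding proper_edge_colouring_def by blast
  fix e assume "e \<in> M" "v \<in> e"
  show "(c({v, x} := a)) e \<noteq> c {v, x}"
  proof (cases "e = {v, x}")
    case True
    with assms(2,3) show ?thesis by (auto dest: missing_colours_edge)
  next
    case False
    with proper \<open>e \<in> M\<close> \<open>v \<in> e\<close> assms(2) show ?thesis
      unfolding proper_edge_colouring_def by auto
  qed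
qed

locale edge_colouring =
  fixes M :: "'a set set" and k :: nat
  assumes finite_edges: "finite M"
    and card_edge: "e \<in> M \<Longrightarrow> card e = 2"
begin

abbreviation proper :: "('a set \<Rightarrow> nat) \<Rightarrow> bool" where
  "proper \<equiv> proper_edge_colouring k M"

abbreviation missing :: "('a set \<Rightarrow> nat) \<Rightarrow> 'a \<Rightarrow> nat set" where
  "missing \<equiv> missing_colours k M"

definition kempe_edges :: "('a set \<Rightarrow> nat) \<Rightarrow> nat \<Rightarrow> nat \<Rightarrow> 'a set set" where
  "kempe_edges c a b = {e\<in>M. c e = a \<or> c e = b}"

abbreviation kempe_linked :: "('a set \<Rightarrow> nat) \<Rightarrow> nat \<Rightarrow> nat \<Rightarrow> 'a \<Rightarrow> 'a \<Rightarrow> bool" where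
  "kempe_linked c a b \<equiv> reachable (kempe_edges c a b)"

definition kempe_swap :: "('a set \<Rightarrow> nat) \<Rightarrow> nat \<Rightarrow> nat \<Rightarrow> 'a \<Rightarrow> 'a set \<Rightarrow> nat" where
  "kempe_swap c a b y e =
     (if e \<in> kempe_edges c a b \<and> (\<exists>z\<in>e. kempe_linked c a b y z)
      then (if c e = a then b else a) else c e)"

lemma kempe_linked_along_edge:
  assumes "kempe_linked c a b y z" "e \<in> kempe_edges c a b" "z \<in> e" "z' \<in> e"
  shows "kempe_linked c a b y z'"
proof (cases "z = z'")
  case False
  have "e \<in> M" using assms(2) unfolding kempe_edges_def by simp
  with False assms(3,4) have "e = {z, z'}" by (intro card_2_eq_doubleton card_edge)
  with assms(1,2) show ?thesis by (auto intro: reachable_edge)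
qed (use assms in simp)

lemma kempe_swap_unlinked:
  assumes "\<not> kempe_linked c a b y z" "z \<in> e"
  shows "kempe_swap c a b y e = c e"
  using assms kempe_linked_along_edge unfolding kempe_swap_def by meson

lemma missing_kempe_swap_unlinked:
  "\<not> kempe_linked c a b y z \<Longrightarrow> missing (kempe_swap c a b y) z = missing c z"
  by (intro missing_colours_cong kempe_swap_unlinked)

lemma missing_kempe_swap_linked:
  assumes "kempe_linked c a b y z" "b \<in> missing c z" "a < k" "a \<noteq> b"
  shows "a \<in> missing (kempe_swap c a b y) z"
  unfolding missing_colours_def
proof (intro CollectI conjI ballI impI)
  fix e assume "e \<in> M" "z \<in> e"
  with assms(2) have "c e \<noteq> b" by (rule missing_colours_edge)
  with assms(1,4) \<open>e \<in> M\<close> \<open>z \<in> e\<close> show "kempe_swap c a b y e \<noteq> a"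
    unfolding kempe_swap_def kempe_edges_def by auto
qed fact

lemma missing_kempe_swap_other:
  assumes "g \<in> missing c z" "g \<noteq> a" "g \<noteq> b"
  shows "g \<in> missing (kempe_swap c a b y) z"
  using assms unfolding missing_colours_def kempe_swap_def by auto

lemma proper_kempe_swap:
  assumes proper: "proper c" and "a < k" "b < k"
  shows "proper (kempe_swap c a b y)"
  unfolding proper_edge_colouring_def
proof (intro conjI ballI impI)
  fix e assume "e \<in> M"
  with assms show "kempe_swap c a b y e < k"
    unfolding kempe_swap_def proper_edge_colouring_def by auto
next
  fix e e' assume e: "e \<in> M" "e' \<in> M" "e \<noteq> e' \<and> e \<inter> e' \<noteq> {}"
  then obtain z where z: "z \<in> e" "z \<in> e'" by blast
  have "c e \<noteq> c e'" using proper e unfolding proper_edge_colouring_def by blast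
  show "kempe_swap c a b y e \<noteq> kempe_swap c a b y e'"
  proof (cases "kempe_linked c a b y z")
    case True
    have "kempe_linked c a b y z'" if "e'' \<in> kempe_edges c a b" "z \<in> e''" "z' \<in> e''" for e'' z'
      using kempe_linked_along_edge[OF True that] .
    with \<open>c e \<noteq> c e'\<close> z e(1,2) show ?thesis
      unfolding kempe_swap_def kempe_edges_def by auto
  next
    case False
    with \<open>c e \<noteq> c e'\<close> z show ?thesis by (simp add: kempe_swap_unlinked)
  qed
qed

lemma deg_kempe_edges_le:
  assumes "proper c"
  shows "deg (kempe_edges c a b) z \<le> card ({a, b} - missing c z)"
proof -
  have "inj_on c {e\<in>kempe_edges c a b. z \<in> e}"
    using inj_on_colours_at_vertex[OF assms] unfolding kempe_edges_def
    by (rule inj_on_subset) auto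
  moreover have "c ` {e\<in>kempe_edges c a b. z \<in> e} \<subseteq> {a, b} - missing c z"
    unfolding kempe_edges_def by (auto dest: missing_colours_edge)
  ultimately show ?thesis
    unfolding deg_def by (rule card_inj_on_le) simp
qed

end

locale vizing_fan = edge_colouring +
  fixes v :: 'a and R :: "'a set"
  assumes root_neq_centre: "u \<in> R \<Longrightarrow> u \<noteq> v"
    and root_edge_not_in: "u \<in> R \<Longrightarrow> {v, u} \<notin> M"
    and root_edge_not_addable: "u \<in> R \<Longrightarrow> \<not> edge_colorable k (insert {v, u} M)"
begin

inductive fan :: "('a set \<Rightarrow> nat) \<Rightarrow> 'a list \<Rightarrow> bool" for c where
  fan_root: "u \<in> R \<Longrightarrow> fan c [u]"
| fan_snoc: "fan c P \<Longrightarrow> {v, x} \<in> M \<Longrightarrow> x \<notin> set P \<Longrightarrow> c {v, x} \<in> missing c (last P)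
    \<Longrightarrow> fan c (P @ [x])"

definition fan_ends :: "('a set \<Rightarrow> nat) \<Rightarrow> 'a set" where
  "fan_ends c = {z. \<exists>P. fan c P \<and> last P = z}"

lemma edge_at_centre_neq: "{v, x} \<in> M \<Longrightarrow> x \<noteq> v"
  using card_edge by fastforce

lemma fan_nonempty: "fan c P \<Longrightarrow> P \<noteq> []"
  by (induction rule: fan.induct) auto

lemma fan_vertex_neq_centre: "fan c P \<Longrightarrow> z \<in> set P \<Longrightarrow> z \<noteq> v"
  by (induction rule: fan.induct) (use root_neq_centre edge_at_centre_neq in auto)

lemma fan_vertex_cases: "fan c P \<Longrightarrow> z \<in> set P \<Longrightarrow> z \<in> R \<or> {v, z} \<in> M"
  by (induction rule: fan.induct) auto

lemma set_fan_subset_fan_ends: "fan c P \<Longrightarrow> set P \<subseteq> fan_ends c"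
proof (induction rule: fan.induct)
  case (fan_root u)
  then show ?case unfolding fan_ends_def using fan.fan_root by fastforce
next
  case (fan_snoc P x)
  then show ?case unfolding fan_ends_def using fan.fan_snoc by fastforce
qed

lemma fan_snocE:
  assumes "fan c (P @ [x])"
  obtains "P = []" "x \<in> R"
    | "fan c P" "{v, x} \<in> M" "x \<notin> set P" "c {v, x} \<in> missing c (last P)"
  using assms by (cases rule: fan.cases) auto

lemma fan_cong:
  assumes "fan c P"
    and "\<And>w. w \<in> set P \<Longrightarrow> c' {v, w} = c {v, w}"
    and "\<And>z. z \<in> set P \<Longrightarrow> missing c' z = missing c z"
  shows "fan c' P"
  using assms
proof (induction rule: fan.induct)
  case (fan_root u)
  then show ?case by (simp add: fan.fan_root)
next
  case (fan_snoc P x)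
  have "last P \<in> set P" using fan_nonempty[OF fan_snoc(1)] by simp
  with fan_snoc show ?case by (auto intro!: fan.fan_snoc)
qed

lemma fan_update_edge:
  assumes "fan c P" "x \<notin> set P"
  shows "fan (c({v, x} := g)) P"
proof (rule fan_cong[OF assms(1)])
  fix w assume "w \<in> set P"
  with assms have "w \<noteq> x" "w \<noteq> v" using fan_vertex_neq_centre by auto
  then show "(c({v, x} := g)) {v, w} = c {v, w}" by (auto simp: doubleton_eq_iff)
next
  fix z assume "z \<in> set P"
  with assms have "z \<noteq> x" "z \<noteq> v" using fan_vertex_neq_centre by auto
  then show "missing (c({v, x} := g)) z = missing c z" by (intro missing_colours_cong) auto
qed

text \<open>Shifting the fan: recolour \<open>{v, x}\<close> with \<open>a\<close>, which frees the old colour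
  of \<open>{v, x}\<close> at \<open>v\<close> while it stays missing at the predecessor of \<open>x\<close>.\<close>
lemma missing_centre_not_missing_fan_end:
  assumes "fan c P" "proper c" "a \<in> missing c v"
  shows "a \<notin> missing c (last P)"
  using assms
proof (induction P arbitrary: c a rule: rev_induct)
  case Nil
  then show ?case using fan_nonempty by blast
next
  case (snoc x P)
  show ?case
  proof
    assume "a \<in> missing c (last (P @ [x]))"
    then have ax: "a \<in> missing c x" by simp
    from snoc.prems(1) show False
    proof (cases rule: fan_snocE)
      case 1
      with snoc.prems(2,3) ax have "edge_colorable k (insert {v, x} M)"
        unfolding edge_colorable_iff_proper by (auto intro: proper_edge_colouring_insert)
      with 1 root_edge_not_addable show False by blast
    next
      case 2
      let ?c' = "c({v, x} := a)"
      have "proper ?c'"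
        using proper_edge_colouring_insert[OF snoc.prems(2,3) ax] 2(2) by (simp add: insert_absorb)
      moreover have "fan ?c' P" using fan_update_edge 2 by blast
      moreover have "c {v, x} \<in> missing ?c' v"
        using missing_colours_update_old_colour[OF snoc.prems(2) 2(2) snoc.prems(3)] .
      moreover have "c {v, x} \<in> missing ?c' (last P)"
      proof -
        have "last P \<in> set P" using fan_nonempty 2(1) by simp
        with 2 have "last P \<noteq> x" "last P \<noteq> v" using fan_vertex_neq_centre by auto
        then have "missing ?c' (last P) = missing c (last P)" by (intro missing_colours_cong) auto
        with 2(4) show ?thesis by simp
      qed
      ultimately show False using snoc.IH by blast
    qed
  qed
qed

text \<open>A Kempe swap away from \<open>v\<close> destroys a fan only where the fan enters the
  swapped chain at a vertex missing \<open>b\<close>; that prefix is a fan of the new colouring.\<close>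
lemma fan_kempe_swap:
  assumes "a \<in> missing c v" "\<not> kempe_linked c a b y v" "fan c P"
  shows "fan (kempe_swap c a b y) P \<or>
    (\<exists>Q. fan (kempe_swap c a b y) Q \<and> b \<in> missing c (last Q) \<and> kempe_linked c a b y (last Q))"
  using assms(3)
proof (induction rule: fan.induct)
  case (fan_root u)
  then show ?case by (simp add: fan.fan_root)
next
  case (fan_snoc P x)
  let ?c' = "kempe_swap c a b y"
  show ?case
  proof (cases "fan ?c' P")
    case fan': True
    have colour: "?c' {v, x} = c {v, x}"
      using kempe_swap_unlinked[OF assms(2)] by simp
    have "c {v, x} \<noteq> a"
      using missing_colours_edge[OF assms(1) fan_snoc.hyps(2)] by simp
    consider "\<not> kempe_linked c a b y (last P)" | "c {v, x} = b" | "c {v, x} \<noteq> b"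
      by blast
    then show ?thesis
    proof cases
      case 1
      with fan_snoc.hyps(4) colour have "?c' {v, x} \<in> missing ?c' (last P)"
        by (simp add: missing_kempe_swap_unlinked)
      with fan' fan_snoc.hyps(2,3) show ?thesis by (blast intro: fan.fan_snoc)
    next
      case 2
      show ?thesis
      proof (cases "kempe_linked c a b y (last P)")
        case True
        with fan' fan_snoc.hyps(4) 2 show ?thesis by auto
      next
        case False
        with fan_snoc.hyps(4) colour have "?c' {v, x} \<in> missing ?c' (last P)"
          by (simp add: missing_kempe_swap_unlinked)
        with fan' fan_snoc.hyps(2,3) show ?thesis by (blast intro: fan.fan_snoc)
      qed
    next
      case 3
      with fan_snoc.hyps(4) colour \<open>c {v, x} \<noteq> a\<close> have "?c' {v, x} \<in> missing ?c' (last P)"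
        by (simp add: missing_kempe_swap_other)
      with fan' fan_snoc.hyps(2,3) show ?thesis by (blast intro: fan.fan_snoc)
    qed
  next
    case False
    with fan_snoc.IH show ?thesis by blast
  qed
qed

lemma kempe_linked_centre_fan_end:
  assumes proper: "proper c" and av: "a \<in> missing c v" and bP: "b \<in> missing c (last P)"
    and "a \<noteq> b" "fan c P"
  shows "kempe_linked c a b v (last P)"
proof (rule ccontr)
  let ?y = "last P"
  let ?c' = "kempe_swap c a b ?y"
  assume "\<not> kempe_linked c a b v ?y"
  then have unlinked: "\<not> kempe_linked c a b ?y v" by (meson reachable_sym)
  have "a < k" using av by (rule missing_colours_less)
  have "b < k" using bP by (rule missing_colours_less)
  with \<open>a < k\<close> have proper': "proper ?c'" by (rule proper_kempe_swap[OF proper])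
  have av': "a \<in> missing ?c' v"
    using missing_kempe_swap_unlinked[OF unlinked] av by simp
  have swapped_end: "a \<in> missing ?c' (last Q)"
    if "b \<in> missing c (last Q)" "kempe_linked c a b ?y (last Q)" for Q
    using missing_kempe_swap_linked[OF that(2,1) \<open>a < k\<close> \<open>a \<noteq> b\<close>] .
  from fan_kempe_swap[OF av unlinked \<open>fan c P\<close>] obtain Q
    where "fan ?c' Q" "a \<in> missing ?c' (last Q)"
  proof (elim disjE exE conjE)
    assume "fan ?c' P"
    moreover have "kempe_linked c a b ?y ?y" by (simp add: reachable_def)
    ultimately show thesis using that swapped_end bP by blast
  qed (use that swapped_end in blast)
  with missing_centre_not_missing_fan_end[OF _ proper' av'] show False by blast
qed

text \<open>Otherwise the \<open>(a, b)\<close>-Kempe chain through \<open>v\<close> would be a path with three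
  ends \<open>v\<close>, \<open>last P\<close> and \<open>last Q\<close>.\<close>
lemma fan_ends_missing_disjoint:
  assumes proper: "proper c" and av: "a \<in> missing c v"
    and "fan c P" "fan c Q" "last P \<noteq> last Q"
    and bP: "b \<in> missing c (last P)"
  shows "b \<notin> missing c (last Q)"
proof
  assume bQ: "b \<in> missing c (last Q)"
  have "a \<noteq> b" using missing_centre_not_missing_fan_end[OF \<open>fan c P\<close> proper av] bP by blast
  have deg_le_1: "deg (kempe_edges c a b) z \<le> 1" if "a \<in> missing c z \<or> b \<in> missing c z" for z
  proof -
    have "card ({a, b} - missing c z) \<le> card {if a \<in> missing c z then b else a}"
      using that by (intro card_mono) auto
    then show ?thesis using deg_kempe_edges_le[OF proper, of a b z] by simp
  qed
  have deg_le_2: "deg (kempe_edges c a b) z \<le> 2" for z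
  proof -
    have "card ({a, b} - missing c z) \<le> card {a, b}" by (rule card_mono) auto
    also have "\<dots> \<le> 2" by (simp add: card_insert_le_m1)
    finally show ?thesis using deg_kempe_edges_le[OF proper, of a b z] by linarith
  qed
  show False
  proof (rule max_degree_two_no_three_ends)
    show "finite (kempe_edges c a b)" using finite_edges unfolding kempe_edges_def by simp
    show "\<forall>e\<in>kempe_edges c a b. card e = 2" using card_edge unfolding kempe_edges_def by simp
    show "\<forall>z. deg (kempe_edges c a b) z \<le> 2" using deg_le_2 by blast
    show "deg (kempe_edges c a b) v \<le> 1" using av by (intro deg_le_1) simp
    show "deg (kempe_edges c a b) (last P) \<le> 1" using bP by (intro deg_le_1) simp
    show "deg (kempe_edges c a b) (last Q) \<le> 1" using bQ by (intro deg_le_1) simp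
    show "v \<noteq> last P" "v \<noteq> last Q"
      using \<open>fan c P\<close> \<open>fan c Q\<close> fan_nonempty fan_vertex_neq_centre by (metis last_in_set)+
    show "last P \<noteq> last Q" by fact
    show "kempe_linked c a b v (last P)" "kempe_linked c a b v (last Q)"
      using kempe_linked_centre_fan_end[OF proper av] bP bQ \<open>a \<noteq> b\<close> \<open>fan c P\<close> \<open>fan c Q\<close>
      by blast+
  qed
qed

lemma fan_end_partner:
  assumes proper: "proper c" and av: "a \<in> missing c v"
    and "x \<in> fan_ends c" and gx: "g \<in> missing c x"
  obtains w where "w \<in> fan_ends c - R" "c {v, w} = g"
proof -
  obtain P where P: "fan c P" "last P = x"
    using \<open>x \<in> fan_ends c\<close> unfolding fan_ends_def by blast
  have "g \<notin> missing c v"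
    using missing_centre_not_missing_fan_end[OF P(1) proper] P(2) gx by blast
  moreover have "g < k" using gx by (rule missing_colours_less)
  ultimately obtain e where e: "e \<in> M" "v \<in> e" "c e = g"
    unfolding missing_colours_def by blast
  with card_edge obtain w where w: "e = {v, w}" by (meson card_2_obtain_other)
  have "w \<in> fan_ends c"
  proof (cases "w \<in> set P")
    case True
    with set_fan_subset_fan_ends[OF P(1)] show ?thesis by blast
  next
    case False
    with P e w gx have "fan c (P @ [w])" by (auto intro: fan.fan_snoc)
    then show ?thesis unfolding fan_ends_def by force
  qed
  moreover have "w \<notin> R" using root_edge_not_in e(1) w by blast
  ultimately show ?thesis using that e(3) w by blast
qed

text \<open>Every unsaturated fan end \<open>x\<close> is matched injectively with a fan end \<open>w \<notin> R\<close>
  such that the colour of \<open>{v, w}\<close> is missing at \<open>x\<close>; the roots are unsaturated,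
  so the unmatched fan ends outside \<open>R\<close> are at least as many as the roots.\<close>
lemma card_roots_le_saturated_neighbours:
  assumes "edge_colorable k M" "deg M v < k"
    and "finite R" "\<And>u. u \<in> R \<Longrightarrow> deg M u < k"
  shows "card R \<le> card {w. {v, w} \<in> M \<and> k \<le> deg M w}"
proof -
  obtain c where proper: "proper c"
    using assms(1) unfolding edge_colorable_iff_proper by blast
  obtain a where av: "a \<in> missing c v"
    using missing_colours_nonempty[OF finite_edges assms(2)] by blast
  define S where "S = fan_ends c"
  define W where "W = {w. {v, w} \<in> M}"
  define L where "L = {x. deg M x < k}"
  have "finite (\<Union>M)"
    using finite_edges card_edge by (intro finite_Union) (auto intro: card_ge_0_finite)
  then have "finite W" unfolding W_def by (rule finite_subset[rotated]) auto
  have "R \<subseteq> S" unfolding S_def fan_ends_def using fan.fan_root by fastforce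
  have "S - R \<subseteq> W"
  proof
    fix z assume "z \<in> S - R"
    then obtain P where P: "fan c P" "last P = z" "z \<notin> R" unfolding S_def fan_ends_def by blast
    then have "z \<in> set P" using last_in_set[OF fan_nonempty[OF P(1)]] by simp
    with fan_vertex_cases[OF P(1)] P(3) show "z \<in> W" unfolding W_def by blast
  qed
  then have "S \<subseteq> R \<union> W" by blast
  then have "finite S" using assms(3) \<open>finite W\<close> by (rule finite_subset[OF _ finite_UnI])
  have "\<forall>x\<in>S \<inter> L. \<exists>w. w \<in> S - R \<and> c {v, w} \<in> missing c x"
  proof
    fix x assume "x \<in> S \<inter> L"
    then obtain g where "g \<in> missing c x"
      using missing_colours_nonempty[OF finite_edges] unfolding L_def by blast
    with fan_end_partner[OF proper av] \<open>x \<in> S \<inter> L\<close> show "\<exists>w. w \<in> S - R \<and> c {v, w} \<in> missing c x"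
      unfolding S_def by (metis IntD1)
  qed
  then obtain p where p: "\<And>x. x \<in> S \<inter> L \<Longrightarrow> p x \<in> S - R \<and> c {v, p x} \<in> missing c x"
    by metis
  have "inj_on p (S \<inter> L)"
  proof (rule inj_onI, rule ccontr)
    fix x y assume xy: "x \<in> S \<inter> L" "y \<in> S \<inter> L" "p x = p y" "x \<noteq> y"
    then obtain P Q where "fan c P" "last P = x" "fan c Q" "last Q = y"
      unfolding S_def fan_ends_def by blast
    with fan_ends_missing_disjoint[OF proper av] p xy show False by metis
  qed
  then have "card (S \<inter> L) \<le> card (S - R)"
    using p \<open>finite S\<close> by (intro card_inj_on_le) auto
  moreover have "card (S \<inter> L) = card R + card ((S - R) \<inter> L)"
  proof -
    have "S \<inter> L = R \<union> ((S - R) \<inter> L)" using \<open>R \<subseteq> S\<close> assms(4) unfolding L_def by blast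
    moreover have "R \<inter> ((S - R) \<inter> L) = {}" by blast
    ultimately show ?thesis using assms(3) \<open>finite S\<close> by (simp add: card_Un_disjoint)
  qed
  moreover have "card (S - R) = card ((S - R) \<inter> L) + card ((S - R) - L)"
    using \<open>finite S\<close> by (simp add: card_Int_Diff)
  moreover have "card ((S - R) - L) \<le> card {w. {v, w} \<in> M \<and> k \<le> deg M w}"
    using \<open>S - R \<subseteq> W\<close> \<open>finite W\<close> unfolding W_def L_def
    by (intro card_mono) (auto intro: finite_subset)
  ultimately show ?thesis by linarith
qed

end

lemma card_unsaturated_neighbours_le_deg:
  assumes "simple_graph V E" "maximal_edge_colorable k E M" "deg M v < k"
  shows "card {u. {v, u} \<in> E \<and> deg M u < k} \<le> deg M v"
proof -
  have "finite V" and E: "\<And>e. e \<in> E \<Longrightarrow> e \<subseteq> V \<and> card e = 2"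
    using assms(1) unfolding simple_graph_def by auto
  have "M \<subseteq> E" "edge_colorable k M"
    and maximal: "\<And>M'. M \<subseteq> M' \<Longrightarrow> M' \<subseteq> E \<Longrightarrow> edge_colorable k M' \<Longrightarrow> M' = M"
    using assms(2) unfolding maximal_edge_colorable_def by auto
  have "finite E" using \<open>finite V\<close> E by (meson Pow_iff finite_Pow_iff finite_subset subsetI)
  with \<open>M \<subseteq> E\<close> have "finite M" by (rule finite_subset)
  define N where "N = {u. {v, u} \<in> E \<and> deg M u < k}"
  define W where "W = {w. {v, w} \<in> M}"
  have "finite N" using \<open>finite V\<close> E unfolding N_def by (auto intro: finite_subset)
  have "finite W" using \<open>finite N\<close> \<open>finite V\<close> \<open>M \<subseteq> E\<close> E unfolding W_def by (auto intro: finite_subset)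
  interpret vizing_fan M k v "N - W"
  proof
    show "finite M" by fact
    show "card e = 2" if "e \<in> M" for e using E \<open>M \<subseteq> E\<close> that by blast
    fix u assume u: "u \<in> N - W"
    then have "{v, u} \<in> E" "{v, u} \<notin> M" unfolding N_def W_def by auto
    show "{v, u} \<notin> M" by fact
    have "card {v, u} = 2" using E \<open>{v, u} \<in> E\<close> by blast
    then show "u \<noteq> v" by auto
    show "\<not> edge_colorable k (insert {v, u} M)"
    proof
      assume "edge_colorable k (insert {v, u} M)"
      then have "insert {v, u} M = M"
        using \<open>{v, u} \<in> E\<close> \<open>M \<subseteq> E\<close> by (intro maximal) auto
      with \<open>{v, u} \<notin> M\<close> show False by blast
    qed
  qed
  have "card (N - W) \<le> card {w\<in>W. k \<le> deg M w}"
  proof -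
    have "card (N - W) \<le> card {w. {v, w} \<in> M \<and> k \<le> deg M w}"
      using \<open>finite N\<close>
      by (intro card_roots_le_saturated_neighbours[OF \<open>edge_colorable k M\<close> assms(3)])
        (auto simp: N_def)
    also have "{w. {v, w} \<in> M \<and> k \<le> deg M w} = {w\<in>W. k \<le> deg M w}"
      by (simp add: W_def)
    finally show ?thesis .
  qed
  moreover have "card N = card (N \<inter> W) + card (N - W)"
    using \<open>finite N\<close> by (rule card_Int_Diff)
  moreover have "card (N \<inter> W) \<le> card {w\<in>W. deg M w < k}"
    using \<open>finite W\<close> unfolding N_def by (intro card_mono) auto
  moreover have "card W = card {w\<in>W. deg M w < k} + card {w\<in>W. k \<le> deg M w}"
  proof -
    have "card W = card (W \<inter> {w. deg M w < k}) + card (W - {w. deg M w < k})"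
      using \<open>finite W\<close> by (rule card_Int_Diff)
    also have "W \<inter> {w. deg M w < k} = {w\<in>W. deg M w < k}" by blast
    also have "W - {w. deg M w < k} = {w\<in>W. k \<le> deg M w}" by (simp add: set_diff_eq not_less)
    finally show ?thesis .
  qed
  moreover have "deg M v = card W"
    unfolding W_def by (rule deg_eq_card_neighbours) (simp add: card_edge)
  ultimately show ?thesis unfolding N_def by linarith
qed

theorem mainTheorem2:
  fixes V :: "'a set" and E M :: "'a set set" and k :: nat
  assumes "simple_graph V E"
    and "k \<ge> 1"
    and "maximal_edge_colorable k E M"
  shows "\<forall>v\<in>{u\<in>V. deg M u < k}. deg (induced_edges E {u\<in>V. deg M u < k}) v \<le> k - 1"
proof
  let ?F = "{u\<in>V. deg M u < k}"
  fix v assume "v \<in> ?F"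
  then have "deg M v < k" by simp
  have "finite V" and E: "\<And>e. e \<in> E \<Longrightarrow> e \<subseteq> V \<and> card e = 2"
    using assms(1) unfolding simple_graph_def by auto
  have "deg (induced_edges E ?F) v = card {u. {v, u} \<in> induced_edges E ?F}"
    using E by (intro deg_eq_card_neighbours) (simp add: induced_edges_def)
  also have "\<dots> \<le> card {u. {v, u} \<in> E \<and> deg M u < k}"
    using \<open>finite V\<close> E by (intro card_mono) (auto simp: induced_edges_def intro: finite_subset)
  also have "\<dots> \<le> deg M v"
    using assms(1,3) \<open>deg M v < k\<close> by (rule card_unsaturated_neighbours_le_deg)
  finally show "deg (induced_edges E ?F) v \<le> k - 1" using \<open>deg M v < k\<close> by linarith
qed

end
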